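(* Consider a system $\Sigma$ undergoing an irreversible isobaric vitrification (cooling) process along a path from an initial equilibrium supercooled-liquid state A at medium temperature $T_{0\text{A}}$ (above the glass-transition onset $T_{0\text{g}}$) to a state $\text{A}_0$ at absolute zero, with no latent heat along the path. Let $S(0)\equiv S_{\text{R}}$ be the entropy of the system at absolute zero (the residual entropy) and let $$S_{\text{expt}}(0)\doteq S(T_{0\text{A}})+\int_{T_{0\text{A}}}^{0} C_P\,\frac{dT_0}{T_0}$$ be the experimentally (calorimetrically) measured, extrapolated entropy at absolute zero. Then $$S_{\text{R}}\equiv S(0)>S_{\text{expt}}(0).$$
   Context: The system $\Sigma$ is in contact with a very large medium $\widetilde{\Sigma}$ that is always in equilibrium at temperature $T_0$ and pressure $P_0$; together they form an isolated system. Every entropy change of the system decomposes as $dS=d_{\text{e}}S+d_{\text{i}}S$, where $d_{\text{e}}S=-d_{\text{e}}Q/T_0\equiv C_P\,dT_0/T_0$ is the entropy exchanged with the medium ($d_{\text{e}}Q$ being the heat given out by the system to the medium at medium temperature $T_0$, and $C_P$ the measured isobaric heat capacity), and $d_{\text{i}}S$ is the entropy generated by irreversible processes inside the system. The second law states $d_{\text{i}}S\ge 0$, with strict inequality $d_{\text{i}}S>0$ for an irreversible process; vitrification (with observation time shorter than the equilibration time below $T_{0\text{g}}$) is an irreversible process. Entropy is treated as a state function of the system's state variables (internal-equilibrium assumption). *)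

theory Defs
  imports "HOL-Analysis.Analysis"
begin

definition oint :: "real \<Rightarrow> real \<Rightarrow> (real \<Rightarrow> real) \<Rightarrow> real" where
  "oint a b f = (if a \<le> b then integral {a..b} f else - integral {b..a} f)"

definition S_expt :: "(real \<Rightarrow> real) \<Rightarrow> (real \<Rightarrow> real) \<Rightarrow> real \<Rightarrow> real" where
  "S_expt S CP T0A = S T0A + oint T0A 0 (\<lambda>T. CP T / T)"

end

theory Submission
  imports Defs
begin

text \<open>Evaluating the entropy balance at T = 0 shows that S(0) exceeds the calorimetric
  value S_expt(0) by exactly the entropy generated along the cooling path. That entropy never
  decreases as the temperature is lowered and strictly increases below the glass transition,
  so it is positive at absolute zero.\<close>

lemma generated_entropy_pos_at_zero:
  fixes Si :: "real \<Rightarrow> real" and T0A T0g :: real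
  assumes "0 < T0g" and "T0g \<le> T0A" and "Si T0A = 0"
    and "\<And>T1 T2. 0 \<le> T1 \<Longrightarrow> T1 \<le> T2 \<Longrightarrow> T2 \<le> T0A \<Longrightarrow> Si T2 \<le> Si T1"
    and "\<And>T1 T2. 0 \<le> T1 \<Longrightarrow> T1 < T2 \<Longrightarrow> T2 \<le> T0g \<Longrightarrow> Si T2 < Si T1"
  shows "0 < Si 0"
proof -
  have "Si T0A \<le> Si T0g" using assms(1,2,4) by simp
  also have "\<dots> < Si 0" using assms(1,5) by simp
  finally show ?thesis using assms(3) by simp
qed

lemma S_zero_eq_S_expt_plus_generated:
  fixes S CP Si :: "real \<Rightarrow> real" and T0A :: real
  assumes "0 \<le> T0A"
    and "\<And>T. T \<in> {0..T0A} \<Longrightarrow> S T = S T0A + oint T0A T (\<lambda>x. CP x / x) + Si T"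
  shows "S 0 = S_expt S CP T0A + Si 0"
  using assms(2)[of 0] assms(1) by (simp add: S_expt_def)

theorem theorem1:
  fixes S CP Si :: "real \<Rightarrow> real" and T0A T0g :: real
  assumes Tg_pos: "0 < T0g" and Tg_A: "T0g < T0A"
    and CP_int: "(\<lambda>T. CP T / T) integrable_on {0..T0A}"
    and Si_start: "Si T0A = 0"
    and balance: "\<And>T. T \<in> {0..T0A} \<Longrightarrow>
                     S T = S T0A + oint T0A T (\<lambda>x. CP x / x) + Si T"
    and diS_nonneg: "\<And>T1 T2. 0 \<le> T1 \<Longrightarrow> T1 \<le> T2 \<Longrightarrow> T2 \<le> T0A \<Longrightarrow> Si T2 \<le> Si T1"
    and diS_pos_vitrification:
          "\<And>T1 T2. 0 \<le> T1 \<Longrightarrow> T1 < T2 \<Longrightarrow> T2 \<le> T0g \<Longrightarrow> Si T2 < Si T1"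
  shows "S 0 > S_expt S CP T0A"
proof -
  have "S 0 = S_expt S CP T0A + Si 0"
    using S_zero_eq_S_expt_plus_generated[OF _ balance] Tg_pos Tg_A by simp
  moreover have "0 < Si 0"
    using generated_entropy_pos_at_zero[where Si = Si, OF Tg_pos less_imp_le[OF Tg_A] Si_start
        diS_nonneg diS_pos_vitrification] .
  ultimately show ?thesis by simp
qed

end
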